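(* Let $l<u$ be real, $D=[l,u]$, let $\Delta Q$ be real with $0<\Delta Q\le u-l$, and let $\epsilon\ge 0$ and $0\le\delta<1$. Let $b>0$ satisfy $$\epsilon-\log\Delta C(b)-\log(1-\delta)>0\quad\text{and}\quad b\ge \frac{\Delta Q}{\epsilon-\log\Delta C(b)-\log(1-\delta)}.$$ Then the bounded Laplace mechanism $\{W_q\mid q\in D\}$ with scale $b$ satisfies $(\epsilon,\delta)$-differential privacy, i.e. for every Borel set $A\subseteq\mathbb{R}$ and all $q,q'\in D$ with $|q-q'|\le\Delta Q$, $$\mathbb{P}(W_q\in A)\le e^{\epsilon}\,\mathbb{P}(W_{q'}\in A)+\delta.$$
   Context: For $b>0$ and $p\in D$, $C_p(b)=\int_l^u\frac{1}{2b}e^{-\frac{|x-p|}{b}}\,dx = 1-\frac12\left(e^{-\frac{p-l}{b}}+e^{-\frac{u-p}{b}}\right)$, and $\Delta C(b)=\frac{C_{l+\Delta Q}(b)}{C_l(b)}$. The bounded Laplace mechanism with scale $b$ is the family of real random variables $W_q$, $q\in D$, where $W_q$ has probability density $f_{W_q}(x)=\frac{1}{C_q(b)}\frac{1}{2b}e^{-\frac{|x-q|}{b}}$ for $x\in D$ and $f_{W_q}(x)=0$ for $x\notin D$. *)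

theory Defs
  imports "HOL-Probability.Probability"
begin

definition C_bl :: "real \<Rightarrow> real \<Rightarrow> real \<Rightarrow> real \<Rightarrow> real" where
  "C_bl l u b p = (LBINT x=l..u. 1 / (2*b) * exp (- \<bar>x - p\<bar> / b))"

definition DeltaC :: "real \<Rightarrow> real \<Rightarrow> real \<Rightarrow> real \<Rightarrow> real" where
  "DeltaC l u dQ b = C_bl l u b (l + dQ) / C_bl l u b l"

definition bl_density :: "real \<Rightarrow> real \<Rightarrow> real \<Rightarrow> real \<Rightarrow> real \<Rightarrow> real" where
  "bl_density l u b q x =
     (if x \<in> {l..u} then 1 / C_bl l u b q * (1 / (2*b)) * exp (- \<bar>x - q\<bar> / b) else 0)"

text \<open>Distribution of W_q: the measure on the reals with the above density.
  P(W_q \<in> A) is measure (bl_laplace l u b q) A.\<close>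
definition bl_laplace :: "real \<Rightarrow> real \<Rightarrow> real \<Rightarrow> real \<Rightarrow> real measure" where
  "bl_laplace l u b q = density lborel (\<lambda>x. ennreal (bl_density l u b q x))"

end

theory Submission
  imports Defs
begin

text \<open>The density of \<open>W\<^sub>q\<close> is at most \<open>C\<^sub>q\<^sub>'(b)/C\<^sub>q(b) \<cdot> e\<^bsup>|q-q'|/b\<^esup>\<close> times that of \<open>W\<^sub>q\<^sub>'\<close>.
  This factor is maximal at \<open>q = l\<close>, \<open>q' = l + \<Delta>Q\<close>, where it equals \<open>\<Delta>C(b) e\<^bsup>\<Delta>Q/b\<^esup>\<close>: for
  fixed distance \<open>d = q' - q\<close> the ratio \<open>C\<^bsub>q+d\<^esub>/C\<^sub>q\<close> decreases in \<open>q\<close> (\<open>C\<close> is positive and concave, hence log-concave),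
  and \<open>C\<^sub>p e\<^bsup>p/b\<^esup>\<close> increases in \<open>p\<close>. The hypothesis on \<open>b\<close> says exactly that this factor is
  at most \<open>e\<^sup>\<epsilon>/(1-\<delta>)\<close>, and a probability \<open>P \<le> min 1 (e\<^sup>\<epsilon> P'/(1-\<delta>))\<close> is at most \<open>e\<^sup>\<epsilon> P' + \<delta>\<close>.\<close>

definition laplace_mass :: "real \<Rightarrow> real \<Rightarrow> real \<Rightarrow> real \<Rightarrow> real" where
  "laplace_mass l u b p = 1 - (exp (-(p-l)/b) + exp (-(u-p)/b)) / 2"

lemma C_bl_eq_laplace_mass:
  assumes b: "b > 0" and lp: "l \<le> p" and pu: "p \<le> u"
  shows "C_bl l u b p = laplace_mass l u b p"
proof -
  let ?f = "\<lambda>x. 1/(2*b) * exp (- \<bar>x-p\<bar>/b)"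
  have "interval_lebesgue_integrable lborel (ereal l) (ereal u) ?f"
    by (rule interval_integrable_isCont) (use b in \<open>auto intro!: continuous_intros\<close>)
  then have split: "(LBINT x=l..u. ?f x) = (LBINT x=l..p. ?f x) + (LBINT x=p..u. ?f x)"
    by (subst interval_integral_sum[symmetric]) (use lp pu in \<open>simp_all add: min_def max_def\<close>)
  have "(LBINT x=l..p. ?f x) = (LBINT x=l..p. 1/(2*b) * exp ((x-p)/b))"
    by (rule interval_integral_cong) (use lp pu in \<open>auto simp: einterval_iff\<close>)
  also have "\<dots> = exp ((p-p)/b)/2 - exp ((l-p)/b)/2"
    by (rule interval_integral_FTC_finite)
       (use b lp in \<open>auto intro!: continuous_intros derivative_eq_intros
          simp: has_real_derivative_iff_has_vector_derivative[symmetric]\<close>)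
  finally have left: "(LBINT x=l..p. ?f x) = 1/2 - exp ((l-p)/b)/2" by simp
  have "(LBINT x=p..u. ?f x) = (LBINT x=p..u. 1/(2*b) * exp (-(x-p)/b))"
    by (rule interval_integral_cong) (use lp pu in \<open>auto simp: einterval_iff\<close>)
  also have "\<dots> = (- exp (-(u-p)/b)/2) - (- exp (-(p-p)/b)/2)"
    by (rule interval_integral_FTC_finite)
       (use b pu in \<open>auto intro!: continuous_intros derivative_eq_intros
          simp: has_real_derivative_iff_has_vector_derivative[symmetric]\<close>)
  finally have right: "(LBINT x=p..u. ?f x) = 1/2 - exp (-(u-p)/b)/2" by simp
  show ?thesis
    unfolding C_bl_def laplace_mass_def split left right by (simp add: field_simps)
qed

lemma laplace_mass_pos:
  assumes "b > 0" "l < u" "l \<le> p" "p \<le> u"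
  shows "laplace_mass l u b p > 0"
proof -
  define a c where "a = exp (-(p-l)/b)" and "c = exp (-(u-p)/b)"
  have "a \<le> 1" "c \<le> 1"
    unfolding a_def c_def using assms by (auto simp: divide_nonpos_pos)
  moreover have "a < 1 \<or> c < 1"
    unfolding a_def c_def using assms by (cases "p = l") (auto simp: divide_neg_pos)
  ultimately have "a + c < 2" by auto
  then show ?thesis unfolding laplace_mass_def a_def c_def by simp
qed

lemma laplace_mass_reflect: "laplace_mass l u b (l + u - p) = laplace_mass l u b p"
  unfolding laplace_mass_def by (simp add: algebra_simps)

lemma laplace_mass_has_real_derivative:
  assumes "b > 0"
  shows "(laplace_mass l u b has_real_derivative (exp (-(p-l)/b) - exp (-(u-p)/b)) / (2*b)) (at p)"
  unfolding laplace_mass_def using assms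
  by (auto intro!: derivative_eq_intros simp: field_simps)

lemma laplace_mass_mult_exp_mono:
  assumes b: "b > 0" and "s \<le> t" "t \<le> u"
  shows "laplace_mass l u b s * exp (s/b) \<le> laplace_mass l u b t * exp (t/b)"
proof (rule DERIV_nonneg_imp_nondecreasing[OF \<open>s \<le> t\<close>])
  fix x assume "s \<le> x" "x \<le> t"
  have "((\<lambda>x. laplace_mass l u b x * exp (x/b)) has_real_derivative
          (1 - exp (-(u-x)/b)) * exp (x/b) / b) (at x)"
    unfolding laplace_mass_def using b
    by (auto intro!: derivative_eq_intros simp: field_simps)
  moreover have "exp (-(u-x)/b) \<le> 1"
    using b \<open>x \<le> t\<close> \<open>t \<le> u\<close> by (simp add: divide_nonpos_pos)
  ultimately show "\<exists>y. ((\<lambda>x. laplace_mass l u b x * exp (x/b)) has_real_derivative y) (at x) \<and> 0 \<le> y"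
    using b by (intro exI[of _ "(1 - exp (-(u-x)/b)) * exp (x/b) / b"]) simp
qed

lemma laplace_mass_shift_ratio_antimono:
  assumes b: "b > 0" and "l < u" "0 \<le> d" "l \<le> s" "s \<le> t" "t + d \<le> u"
  shows "laplace_mass l u b (t+d) / laplace_mass l u b t \<le> laplace_mass l u b (s+d) / laplace_mass l u b s"
proof (rule DERIV_nonpos_imp_nonincreasing[OF \<open>s \<le> t\<close>])
  fix x assume "s \<le> x" "x \<le> t"
  define a1 c1 a2 c2 where "a1 = exp (-(x-l)/b)" and "c1 = exp (-(u-x)/b)"
    and "a2 = exp (-(x+d-l)/b)" and "c2 = exp (-(u-(x+d))/b)"
  define m where "m = laplace_mass l u b x"
  have "m > 0" unfolding m_def using laplace_mass_pos assms \<open>s \<le> x\<close> \<open>x \<le> t\<close> by auto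
  have "((\<lambda>x. laplace_mass l u b (x+d) / laplace_mass l u b x) has_real_derivative
          ((a2 - c2) / (2*b) * m - laplace_mass l u b (x+d) * ((a1 - c1) / (2*b))) / (m * m)) (at x)"
    unfolding a1_def c1_def a2_def c2_def m_def using \<open>m > 0\<close> b
    by (intro DERIV_divide laplace_mass_has_real_derivative
          DERIV_shift[THEN iffD1, OF laplace_mass_has_real_derivative]) (auto simp: m_def)
  also have "(a2 - c2) / (2*b) * m - laplace_mass l u b (x+d) * ((a1 - c1) / (2*b))
      = - ((a1 - a2) * (1 - c2) + (c2 - c1) * (1 - a2)) / (2*b)"
    unfolding m_def laplace_mass_def a1_def c1_def a2_def c2_def using b
    by (simp add: field_simps)
  finally have deriv: "((\<lambda>x. laplace_mass l u b (x+d) / laplace_mass l u b x) has_real_derivative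
      - ((a1 - a2) * (1 - c2) + (c2 - c1) * (1 - a2)) / (2*b) / (m * m)) (at x)" .
  have "a2 \<le> a1" "c1 \<le> c2" "c2 \<le> 1" "a2 \<le> 1"
    unfolding a1_def a2_def c1_def c2_def using assms \<open>s \<le> x\<close> \<open>x \<le> t\<close>
    by (auto simp: divide_right_mono divide_nonpos_pos)
  then have "0 \<le> (a1 - a2) * (1 - c2) + (c2 - c1) * (1 - a2)" by simp
  then have "- ((a1 - a2) * (1 - c2) + (c2 - c1) * (1 - a2)) / (2*b) / (m * m) \<le> 0"
    using b \<open>m > 0\<close> by (intro divide_nonpos_pos) auto
  with deriv show "\<exists>y. ((\<lambda>x. laplace_mass l u b (x+d) / laplace_mass l u b x)
      has_real_derivative y) (at x) \<and> y \<le> 0"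
    by blast
qed

lemma laplace_mass_ratio_le:
  assumes b: "b > 0" and lu: "l < u" and "dQ \<le> u - l"
    and q: "q \<in> {l..u}" and q': "q' \<in> {l..u}" and "\<bar>q - q'\<bar> \<le> dQ"
  shows "laplace_mass l u b q' * exp (\<bar>q - q'\<bar>/b) / laplace_mass l u b q
           \<le> laplace_mass l u b (l+dQ) * exp (dQ/b) / laplace_mass l u b l"
proof -
  let ?m = "laplace_mass l u b"
  have ordered: "?m (q+d) * exp (d/b) / ?m q \<le> ?m (l+dQ) * exp (dQ/b) / ?m l"
    if "l \<le> q" "0 \<le> d" "d \<le> dQ" "q + d \<le> u" for q d
  proof -
    have "?m l > 0" using laplace_mass_pos b lu by auto
    have "?m (q+d) * exp (d/b) / ?m q = ?m (q+d) / ?m q * exp (d/b)" by simp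
    also have "\<dots> \<le> ?m (l+d) / ?m l * exp (d/b)"
      using laplace_mass_shift_ratio_antimono[of b l u d l q] b lu that
      by (intro mult_right_mono) auto
    also have "\<dots> = ?m (l+d) * exp ((l+d)/b) / (?m l * exp (l/b))"
      by (simp add: add_divide_distrib exp_add)
    also have "\<dots> \<le> ?m (l+dQ) * exp ((l+dQ)/b) / (?m l * exp (l/b))"
      using laplace_mass_mult_exp_mono[of b "l+d" "l+dQ" u l] b \<open>?m l > 0\<close> that \<open>dQ \<le> u - l\<close>
      by (intro divide_right_mono) auto
    also have "\<dots> = ?m (l+dQ) * exp (dQ/b) / ?m l"
      by (simp add: add_divide_distrib exp_add)
    finally show ?thesis .
  qed
  show ?thesis
  proof (cases "q \<le> q'")
    case True
    then show ?thesis using ordered[of q "q' - q"] q q' assms by auto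
  next
    case False
    have "?m (l+u-q') * exp ((q-q')/b) / ?m (l+u-q) \<le> ?m (l+dQ) * exp (dQ/b) / ?m l"
      using ordered[of "l+u-q" "q-q'"] q q' assms False by (simp add: algebra_simps)
    then show ?thesis unfolding laplace_mass_reflect using False by simp
  qed
qed

lemma DeltaC_eq:
  assumes "b > 0" "0 \<le> dQ" "dQ \<le> u - l"
  shows "DeltaC l u dQ b = laplace_mass l u b (l+dQ) / laplace_mass l u b l"
  unfolding DeltaC_def using assms by (simp add: C_bl_eq_laplace_mass)

lemma DeltaC_pos:
  assumes "b > 0" "l < u" "0 \<le> dQ" "dQ \<le> u - l"
  shows "DeltaC l u dQ b > 0"
  using assms by (simp add: DeltaC_eq laplace_mass_pos)

lemma bl_density_le_DeltaC:
  assumes b: "b > 0" and lu: "l < u" and dQ: "dQ \<le> u - l"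
    and q: "q \<in> {l..u}" and q': "q' \<in> {l..u}" and qq': "\<bar>q - q'\<bar> \<le> dQ"
  shows "bl_density l u b q x \<le> DeltaC l u dQ b * exp (dQ/b) * bl_density l u b q' x"
proof (cases "x \<in> {l..u}")
  case False
  then show ?thesis unfolding bl_density_def if_not_P[OF False] by simp
next
  case True
  let ?m = "laplace_mass l u b"
  have "?m q > 0" "?m q' > 0" using laplace_mass_pos b lu q q' by auto
  have "-\<bar>x-q\<bar>/b \<le> (-\<bar>x-q'\<bar> + \<bar>q-q'\<bar>)/b"
    using b by (intro divide_right_mono) auto
  then have "exp (-\<bar>x-q\<bar>/b) \<le> exp (-\<bar>x-q'\<bar>/b) * exp (\<bar>q-q'\<bar>/b)"
    by (simp add: add_divide_distrib diff_divide_distrib flip: exp_add)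
  then have "bl_density l u b q x \<le> ?m q' * exp (\<bar>q-q'\<bar>/b) / ?m q * bl_density l u b q' x"
    using True b q q' \<open>?m q > 0\<close> \<open>?m q' > 0\<close>
    by (simp add: bl_density_def C_bl_eq_laplace_mass field_simps)
  also have "\<dots> \<le> DeltaC l u dQ b * exp (dQ/b) * bl_density l u b q' x"
    using laplace_mass_ratio_le[OF b lu dQ q q' qq'] True b q' qq' dQ \<open>?m q' > 0\<close>
    by (intro mult_right_mono) (simp_all add: DeltaC_eq bl_density_def C_bl_eq_laplace_mass)
  finally show ?thesis .
qed

lemma measure_density_le_scaled:
  fixes f g :: "'a \<Rightarrow> real"
  assumes [measurable]: "f \<in> borel_measurable M" "g \<in> borel_measurable M" "A \<in> sets M"
    and le: "\<And>x. x \<in> space M \<Longrightarrow> f x \<le> K * g x" and "0 \<le> K"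
    and "finite_measure (density M g)"
  shows "measure (density M f) A \<le> K * measure (density M g) A"
proof -
  have "emeasure (density M f) A = (\<integral>\<^sup>+x\<in>A. ennreal (f x) \<partial>M)"
    by (simp add: emeasure_density)
  also have "\<dots> \<le> (\<integral>\<^sup>+x\<in>A. ennreal K * ennreal (g x) \<partial>M)"
    using le \<open>0 \<le> K\<close>
    by (intro nn_integral_mono mult_right_mono) (simp_all add: ennreal_leI flip: ennreal_mult')
  also have "\<dots> = ennreal K * emeasure (density M g) A"
    by (simp add: emeasure_density nn_integral_cmult mult.assoc)
  finally have "emeasure (density M f) A \<le> ennreal K * emeasure (density M g) A" .
  moreover have "emeasure (density M g) A \<noteq> \<top>"
    using \<open>finite_measure (density M g)\<close> finite_measure.emeasure_finite by blast
  ultimately show ?thesis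
    unfolding measure_def using \<open>0 \<le> K\<close>
    by (metis enn2real_mono enn2real_mult enn2real_ennreal ennreal_mult_less_top
        ennreal_less_top top.not_eq_extremum)
qed

lemma bl_density_measurable[measurable]: "bl_density l u b q \<in> borel_measurable borel"
  unfolding bl_density_def by measurable

lemma prob_space_bl_laplace:
  assumes b: "b > 0" and lu: "l < u" and q: "q \<in> {l..u}"
  shows "prob_space (bl_laplace l u b q)"
proof
  let ?f = "\<lambda>x. 1/(2*b) * exp (- \<bar>x-q\<bar>/b) * indicator {l..u} x"
  have "C_bl l u b q > 0"
    using b lu q by (simp add: C_bl_eq_laplace_mass laplace_mass_pos)
  have "integrable lborel ?f"
    by (rule borel_integrable_atLeastAtMost) (use b in \<open>auto intro!: continuous_intros\<close>)
  have "(LINT x|lborel. ?f x) = C_bl l u b q"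
    unfolding C_bl_def using lu
    by (simp add: interval_integral_Icc set_lebesgue_integral_def mult.commute)
  have "(\<integral>\<^sup>+x. ennreal (?f x / C_bl l u b q) \<partial>lborel) = ennreal (LINT x|lborel. ?f x / C_bl l u b q)"
    using \<open>integrable lborel ?f\<close> \<open>C_bl l u b q > 0\<close> b
    by (intro nn_integral_eq_integral integrable_divide AE_I2) auto
  also have "\<dots> = ennreal (C_bl l u b q / C_bl l u b q)"
    by (simp only: integral_divide_zero \<open>(LINT x|lborel. ?f x) = C_bl l u b q\<close>)
  finally have "(\<integral>\<^sup>+x. ennreal (?f x / C_bl l u b q) \<partial>lborel) = 1"
    using \<open>C_bl l u b q > 0\<close> by simp
  moreover have "bl_density l u b q x = ?f x / C_bl l u b q" for x
    unfolding bl_density_def by (auto simp: indicator_def)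
  ultimately show "emeasure (bl_laplace l u b q) (space (bl_laplace l u b q)) = 1"
    unfolding bl_laplace_def by (simp add: emeasure_density)
qed

lemma le_mult_plus_of_le_min_one:
  fixes p p' K e \<delta> :: real
  assumes "p \<le> 1" "p \<le> K * p'" "K \<le> e / (1 - \<delta>)" "0 \<le> p'" "0 \<le> \<delta>" "\<delta> < 1"
  shows "p \<le> e * p' + \<delta>"
proof (cases "e * p' \<le> 1 - \<delta>")
  case True
  have "p \<le> e / (1 - \<delta>) * p'" using assms by (meson mult_right_mono order.trans)
  also have "\<dots> = e * p' / (1 - \<delta>)" by simp
  also have "\<dots> \<le> e * p' + \<delta>"
    using True assms mult_right_mono[OF True \<open>0 \<le> \<delta>\<close>]
    by (simp add: pos_divide_le_eq algebra_simps)
  finally show ?thesis .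
qed (use assms in linarith)

lemma mult_exp_le_of_scale_ge:
  fixes D dQ \<epsilon> \<delta> b :: real
  assumes "D > 0" "\<delta> < 1" "b > 0" "\<epsilon> - ln D - ln (1 - \<delta>) > 0"
    and "b \<ge> dQ / (\<epsilon> - ln D - ln (1 - \<delta>))"
  shows "D * exp (dQ/b) \<le> exp \<epsilon> / (1 - \<delta>)"
proof -
  have "dQ/b \<le> \<epsilon> - ln D - ln (1 - \<delta>)"
    using assms by (simp add: pos_divide_le_eq mult.commute)
  have "D * exp (dQ/b) = exp (ln D + dQ/b)"
    using \<open>D > 0\<close> by (simp add: exp_add)
  also have "\<dots> \<le> exp (\<epsilon> - ln (1 - \<delta>))"
    using \<open>dQ/b \<le> \<epsilon> - ln D - ln (1 - \<delta>)\<close> by simp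
  also have "\<dots> = exp \<epsilon> / (1 - \<delta>)"
    using \<open>\<delta> < 1\<close> by (simp add: exp_diff)
  finally show ?thesis .
qed

theorem theorem3p3:
  fixes l u dQ \<epsilon> \<delta> b :: real
  assumes "l < u"
    and "0 < dQ" and "dQ \<le> u - l"
    and "\<epsilon> \<ge> 0" and "0 \<le> \<delta>" and "\<delta> < 1"
    and "b > 0"
    and "\<epsilon> - ln (DeltaC l u dQ b) - ln (1 - \<delta>) > 0"
    and "b \<ge> dQ / (\<epsilon> - ln (DeltaC l u dQ b) - ln (1 - \<delta>))"
  shows "\<forall>A \<in> sets borel. \<forall>q \<in> {l..u}. \<forall>q' \<in> {l..u}. \<bar>q - q'\<bar> \<le> dQ \<longrightarrow>
           measure (bl_laplace l u b q) A
             \<le> exp \<epsilon> * measure (bl_laplace l u b q') A + \<delta>"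
proof (intro ballI impI)
  fix A :: "real set" and q q' assume A: "A \<in> sets borel" and q: "q \<in> {l..u}" and q': "q' \<in> {l..u}"
    and qq': "\<bar>q - q'\<bar> \<le> dQ"
  define K where "K = DeltaC l u dQ b * exp (dQ/b)"
  have "DeltaC l u dQ b > 0" using DeltaC_pos assms by simp
  then have "K \<le> exp \<epsilon> / (1 - \<delta>)"
    unfolding K_def using assms by (intro mult_exp_le_of_scale_ge) auto
  moreover have "finite_measure (bl_laplace l u b q')"
    using prob_space_bl_laplace[of b l u q'] q' assms by (simp add: prob_space_def)
  then have "measure (bl_laplace l u b q) A \<le> K * measure (bl_laplace l u b q') A"
    unfolding bl_laplace_def K_def using A q q' qq' assms \<open>DeltaC l u dQ b > 0\<close>
    by (intro measure_density_le_scaled bl_density_le_DeltaC) auto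
  ultimately show "measure (bl_laplace l u b q) A \<le> exp \<epsilon> * measure (bl_laplace l u b q') A + \<delta>"
    using assms prob_space.prob_le_1[OF prob_space_bl_laplace[of b l u q]] q
    by (intro le_mult_plus_of_le_min_one[where K = K]) auto
qed

end
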